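(* Let $n\ge 1$ and let $\Phi_n\sim DPP(K_n)$ be a stationary determinantal point process on $\mathbb{R}^n$, where $K_n\in L^2(\mathbb{R}^n)$ is a continuous, symmetric ($K_n(x)=K_n(-x)$), real-valued function with $K_n(0)>0$, and assume its Fourier transform satisfies $0\le \hat K_n<1$. Let $\eta_n$ be a point process such that $\Phi_n=\Phi_n^{0,!}\cup\eta_n$ in distribution and $\Phi_n^{0,!}\cap\eta_n=\emptyset$. Let $X_n$ be a random vector in $\mathbb{R}^n$ with probability density $x\mapsto K_n(x)^2/\|K_n\|_2^2$. Then for every Borel set $B\subseteq\mathbb{R}^n$, \[\mathbb{P}(X_n\in B)=\frac{\mathbb{E}[\eta_n(B)]}{\mathbb{E}[\eta_n(\mathbb{R}^n)]}.\]
   Context: A simple locally finite point process $\Phi$ on $\mathbb{R}^n$ is a determinantal point process with kernel $K$ ($\Phi\sim DPP(K)$) if for every $k\ge1$ its $k$-th joint intensity (correlation function) exists and equals $\rho^{(k)}(x_1,\dots,x_k)=\det(K(x_i,x_j))_{1\le i,j\le k}$. "Stationary with kernel $K_n$" means the two-point kernel is $K(x,y)=K_n(x-y)$; the intensity is then $K_n(0)$. The Fourier transform is $\hat f(\xi)=\int f(x)e^{-2\pi i x\cdot \xi}\,dx$; the condition $0\le\hat K_n\le 1$ is equivalent to existence of the DPP. $\Phi_n^{0,!}$ denotes a point process having the reduced Palm distribution of $\Phi_n$ (the distribution of $\Phi_n$ conditioned to have a point at the origin, with that point removed). Under the hypotheses (in particular $\hat K_n<1$), a point process $\eta_n$ with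 $\Phi_n=\Phi_n^{0,!}\cup\eta_n$ in distribution and $\Phi_n^{0,!}\cap\eta_n=\emptyset$ exists (Goldman). $\|\cdot\|_2$ is the $L^2(\mathbb{R}^n)$ norm. *)

theory Defs
  imports "HOL-Probability.Probability"
begin

definition locally_finite_set :: "'a::euclidean_space set \<Rightarrow> bool" where
  "locally_finite_set S \<longleftrightarrow> (\<forall>B. bounded B \<longrightarrow> finite (S \<inter> B))"

definition pcount :: "'a set \<Rightarrow> 'a set \<Rightarrow> ennreal" where
  "pcount S B = (if finite (S \<inter> B) then of_nat (card (S \<inter> B)) else \<infinity>)"

definition configs :: "'a::euclidean_space set measure" where
  "configs = sigma {S. locally_finite_set S}
     {{S. locally_finite_set S \<and> card (S \<inter> B) = k} | B k. B \<in> sets borel \<and> bounded B}"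

definition distinct_tuples :: "nat \<Rightarrow> 'a set \<Rightarrow> (nat \<Rightarrow> 'a) set" where
  "distinct_tuples k S = {x \<in> PiE {..<k} (\<lambda>_. S). inj_on x {..<k}}"

definition kdet :: "('a \<Rightarrow> 'a \<Rightarrow> real) \<Rightarrow> nat \<Rightarrow> (nat \<Rightarrow> 'a) \<Rightarrow> real" where
  "kdet K k x = (\<Sum>\<sigma> | \<sigma> permutes {..<k}. of_int (sign \<sigma>) * (\<Prod>i<k. K (x i) (x (\<sigma> i))))"

definition dpp :: "'a::euclidean_space set measure \<Rightarrow> ('a \<Rightarrow> 'a \<Rightarrow> real) \<Rightarrow> bool" where
  "dpp P K \<longleftrightarrow> prob_space P \<and> sets P = sets configs \<and>
     (\<forall>k\<ge>1. (AE x in PiM {..<k} (\<lambda>_. lborel). kdet K k x \<ge> 0) \<and>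
        (\<forall>f \<in> borel_measurable (PiM {..<k} (\<lambda>_. lborel)).
           (\<integral>\<^sup>+ S. (\<integral>\<^sup>+ x. f x \<partial>count_space (distinct_tuples k S)) \<partial>P)
           = (\<integral>\<^sup>+ x. f x * ennreal (kdet K k x) \<partial>PiM {..<k} (\<lambda>_. lborel))))"

text \<open>Q is the reduced Palm distribution (at the origin) of the stationary point
  process with law P, defined by the Campbell--Mecke formula for stationary processes.\<close>
definition reduced_palm :: "'a::euclidean_space set measure \<Rightarrow> 'a set measure \<Rightarrow> bool" where
  "reduced_palm P Q \<longleftrightarrow> prob_space Q \<and> sets Q = sets configs \<and>
     (\<forall>h \<in> borel_measurable configs. \<forall>B \<in> sets borel. bounded B \<longrightarrow>
        (\<integral>\<^sup>+ S. (\<integral>\<^sup>+ x. indicator B x * h ((\<lambda>y. y - x) ` (S - {x})) \<partial>count_space S) \<partial>P)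
        = (\<integral>\<^sup>+ S. pcount S B \<partial>P) * (\<integral>\<^sup>+ S. h S \<partial>Q))"

definition fourier :: "('a::euclidean_space \<Rightarrow> complex) \<Rightarrow> 'a \<Rightarrow> complex" where
  "fourier f \<xi> = (\<integral>x. f x * cis (- 2 * pi * (x \<bullet> \<xi>)) \<partial>lborel)"

text \<open>g is the (L^2, Plancherel) Fourier transform of the L^2 function K,
  characterised by duality against L^1 \<inter> L^2 test functions.\<close>
definition L2_fourier :: "('a::euclidean_space \<Rightarrow> real) \<Rightarrow> ('a \<Rightarrow> real) \<Rightarrow> bool" where
  "L2_fourier K g \<longleftrightarrow> g \<in> borel_measurable lborel \<and> integrable lborel (\<lambda>x. (g x)\<^sup>2) \<and>
     (\<forall>\<phi> :: 'a \<Rightarrow> complex. integrable lborel \<phi> \<and> integrable lborel (\<lambda>x. (cmod (\<phi> x))\<^sup>2) \<longrightarrow>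
        (\<integral>\<xi>. complex_of_real (g \<xi>) * \<phi> \<xi> \<partial>lborel) = (\<integral>x. complex_of_real (K x) * fourier \<phi> x \<partial>lborel))"

end

theory Submission
  imports Defs
begin

(* Campbell's formula gives E \<Phi>(B) = K(0) |B|. Testing the Campbell-Mecke formula that defines the
   reduced Palm distribution against a unit cube turns E \<Phi>^{0,!}(B) into a second factorial moment of
   \<Phi>, whose density K(0)^2 - K(y - x)^2 yields K(0) E \<Phi>^{0,!}(B) = \<integral>_B (K(0)^2 - K^2). As \<Phi> is the
   disjoint superposition of \<Phi>^{0,!} and \<eta>, subtracting gives K(0) E \<eta>(B) = \<integral>_B K^2: first for
   bounded B, where all terms are finite (nonnegativity of the 2x2 determinants gives K^2 \<le> K(0)^2
   a.e.), then for every Borel B by monotone convergence. So the intensity measure of \<eta> is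
   proportional to the law of X. *)

lemma ennreal_mult_divide_mult_cancel:
  fixes a b k :: ennreal
  assumes "k \<noteq> 0" "k \<noteq> \<top>"
  shows "(k * a) / (k * b) = a / b"
proof -
  have "inverse (k * b) = inverse k * inverse b"
    using assms by (intro ennreal_inverse_mult') (auto simp: top.not_eq_extremum zero_less_iff_neq_zero)
  moreover have "k * inverse k = 1"
    using assms ennreal_divide_self[of k] by (simp add: divide_ennreal_def top.not_eq_extremum)
  ultimately show ?thesis
    unfolding divide_ennreal_def by (metis mult.assoc mult.commute mult_1)
qed

lemma measurable_if_prob_space_distr:
  assumes prob: "prob_space (distr M N f)" and f: "f \<in> space M \<rightarrow> space N"
  shows "f \<in> measurable M N"
proof (rule measurableI)
  show "x \<in> space M \<Longrightarrow> f x \<in> space N" for x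
    using f by auto
next
  fix A assume A: "A \<in> sets N"
  show "f -` A \<inter> space M \<in> sets M"
  proof (rule ccontr)
    assume not_A: "f -` A \<inter> space M \<notin> sets M"
    have not_co_A: "f -` (space N - A) \<inter> space M \<notin> sets M"
    proof
      assume "f -` (space N - A) \<inter> space M \<in> sets M"
      then have "space M - (f -` (space N - A) \<inter> space M) \<in> sets M"
        by auto
      also have "space M - (f -` (space N - A) \<inter> space M) = f -` A \<inter> space M"
        using f sets.sets_into_space[OF A] by auto
      finally show False
        using not_A by simp
    qed
    \<comment> \<open>distr assigns measure 0 to every set whose preimage is not measurable.\<close>
    have null: "emeasure (distr M N f) Y = 0" if "f -` Y \<inter> space M \<notin> sets M" for Y
      using that emeasure_notin_sets[OF that]
      unfolding distr_def emeasure_measure_of_conv by auto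
    have "emeasure (distr M N f) (space N) = emeasure (distr M N f) (A \<union> (space N - A))"
      using sets.sets_into_space[OF A] by (simp add: Un_absorb1)
    also have "\<dots> = emeasure (distr M N f) A + emeasure (distr M N f) (space N - A)"
      using A by (intro plus_emeasure[symmetric]) auto
    also have "\<dots> = 0"
      using null[OF not_A] null[OF not_co_A] by simp
    finally show False
      using prob_space.emeasure_space_1[OF prob] by simp
  qed
qed

lemma nn_integral_lborel_translate:
  fixes g :: "'a::euclidean_space \<Rightarrow> ennreal"
  assumes "g \<in> borel_measurable borel"
  shows "(\<integral>\<^sup>+ y. g (y - x) \<partial>lborel) = (\<integral>\<^sup>+ z. g z \<partial>lborel)"
proof -
  have "(\<integral>\<^sup>+ z. g z \<partial>lborel) = (\<integral>\<^sup>+ z. g z \<partial>distr lborel borel ((+) (- x)))"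
    by (simp add: lborel_distr_plus)
  also have "\<dots> = (\<integral>\<^sup>+ y. g (y - x) \<partial>lborel)"
    using assms by (subst nn_integral_distr) auto
  finally show ?thesis ..
qed

lemma nn_integral_lborel_translate_pair:
  fixes g :: "'a::euclidean_space \<Rightarrow> ennreal"
  assumes A: "A \<in> sets borel" and g: "g \<in> borel_measurable borel"
  shows "(\<integral>\<^sup>+ x. \<integral>\<^sup>+ y. indicator A x * g (y - x) \<partial>lborel \<partial>lborel) = emeasure lborel A * (\<integral>\<^sup>+ z. g z \<partial>lborel)"
proof -
  have g_shift: "(\<lambda>y. g (y - x)) \<in> borel_measurable lborel" for x
    using g by measurable
  have "(\<integral>\<^sup>+ x. \<integral>\<^sup>+ y. indicator A x * g (y - x) \<partial>lborel \<partial>lborel)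
      = (\<integral>\<^sup>+ x. indicator A x * (\<integral>\<^sup>+ z. g z \<partial>lborel) \<partial>lborel)"
    by (simp add: nn_integral_cmult[OF g_shift] nn_integral_lborel_translate[OF g])
  also have "\<dots> = emeasure lborel A * (\<integral>\<^sup>+ z. g z \<partial>lborel)"
    using A by (simp add: nn_integral_multc)
  finally show ?thesis .
qed

lemma nn_integral_PiM_lessThan_1:
  fixes f :: "'a::euclidean_space \<Rightarrow> ennreal"
  assumes "f \<in> borel_measurable lborel"
  shows "(\<integral>\<^sup>+ t. f (t 0) \<partial>PiM {..<1::nat} (\<lambda>_. lborel)) = (\<integral>\<^sup>+ x. f x \<partial>lborel)"
proof -
  interpret product_sigma_finite "\<lambda>_::nat. lborel::'a measure" by standard
  have "{..<1::nat} = {0}" by auto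
  then show ?thesis using product_nn_integral_singleton[OF assms] by simp
qed

lemma measurable_PiM_lessThan_2:
  fixes f :: "'a::euclidean_space \<Rightarrow> 'a \<Rightarrow> 'b::topological_space"
  assumes f: "case_prod f \<in> borel_measurable (lborel \<Otimes>\<^sub>M lborel)"
  shows "(\<lambda>t. f (t 0) (t 1)) \<in> borel_measurable (PiM {..<2::nat} (\<lambda>_. lborel))"
  by (rule measurable_compose[OF _ f, where f="\<lambda>t. (t 0, t 1)", simplified])
    (intro measurable_Pair measurable_component_singleton; simp)

lemma nn_integral_PiM_lessThan_2:
  fixes f :: "'a::euclidean_space \<Rightarrow> 'a \<Rightarrow> ennreal"
  assumes f: "case_prod f \<in> borel_measurable (lborel \<Otimes>\<^sub>M lborel)"
  shows "(\<integral>\<^sup>+ t. f (t 0) (t 1) \<partial>PiM {..<2::nat} (\<lambda>_. lborel)) = (\<integral>\<^sup>+ x. \<integral>\<^sup>+ y. f x y \<partial>lborel \<partial>lborel)"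
proof -
  interpret product_sigma_finite "\<lambda>_::nat. lborel::'a measure" by standard
  have two: "{..<2::nat} = insert 1 {0}" by auto
  from measurable_PiM_lessThan_2[OF f] have "(\<integral>\<^sup>+ t. f (t 0) (t 1) \<partial>PiM {..<2::nat} (\<lambda>_. lborel))
      = (\<integral>\<^sup>+ t. (\<lambda>x. \<integral>\<^sup>+ y. f x y \<partial>lborel) (t 0) \<partial>PiM {0::nat} (\<lambda>_. lborel))"
    unfolding two by (subst product_nn_integral_insert) auto
  also have "\<dots> = (\<integral>\<^sup>+ x. \<integral>\<^sup>+ y. f x y \<partial>lborel \<partial>lborel)"
    using lborel.borel_measurable_nn_integral_fst[OF f]
    by (intro product_nn_integral_singleton) simp
  finally show ?thesis .
qed

lemma locally_finite_set_Un:
  "locally_finite_set S \<Longrightarrow> locally_finite_set T \<Longrightarrow> locally_finite_set (S \<union> T)"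
  by (auto simp: locally_finite_set_def Int_Un_distrib2)

lemma locally_finite_set_countable:
  assumes "locally_finite_set S"
  shows "countable S"
proof -
  have "S = (\<Union>n::nat. S \<inter> cball 0 (real n))"
    by (auto simp: real_arch_simple)
  also have "countable \<dots>"
    using assms by (intro countable_UN[OF countableI_type] countable_finite)
      (simp add: locally_finite_set_def)
  finally show ?thesis .
qed

lemma space_configs: "space configs = {S. locally_finite_set S}"
  unfolding configs_def by (simp add: space_measure_of_conv)

lemma sets_configs:
  "sets configs = sigma_sets {S. locally_finite_set S}
     {{S. locally_finite_set S \<and> card (S \<inter> B) = k} | B k. B \<in> sets borel \<and> bounded B}"
  unfolding configs_def by (subst sets_measure_of) auto

lemma pcount_eq_emeasure: "pcount S B = emeasure (count_space UNIV) (S \<inter> B)"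
  by (simp add: pcount_def emeasure_count_space)

lemma pcount_eq_nn_integral: "pcount S B = (\<integral>\<^sup>+ x. indicator B x \<partial>count_space S)"
proof -
  have "(\<integral>\<^sup>+ x. indicator B x \<partial>count_space S) = (\<integral>\<^sup>+ x. indicator (S \<inter> B) x \<partial>count_space S)"
    by (rule nn_integral_cong) (auto simp: indicator_def)
  then show ?thesis
    by (simp add: pcount_def emeasure_count_space)
qed

lemma pcount_mono: "B \<subseteq> C \<Longrightarrow> pcount S B \<le> pcount S C"
  unfolding pcount_eq_emeasure by (rule emeasure_mono) auto

lemma pcount_Un_disjoint: "S \<inter> T = {} \<Longrightarrow> pcount (S \<union> T) B = pcount S B + pcount T B"
  unfolding pcount_eq_emeasure Int_Un_distrib2 by (subst plus_emeasure) auto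

lemma pcount_SUP_ball: "pcount S B = (SUP n::nat. pcount S (B \<inter> ball 0 (real n)))"
proof -
  have "(SUP n::nat. emeasure (count_space UNIV) (S \<inter> (B \<inter> ball 0 (real n))))
      = emeasure (count_space UNIV) (\<Union>n. S \<inter> (B \<inter> ball 0 (real n)))"
    by (rule SUP_emeasure_incseq) (auto simp: incseq_def)
  also have "(\<Union>n. S \<inter> (B \<inter> ball 0 (real n))) = S \<inter> B"
    by (auto intro: reals_Archimedean2)
  finally show ?thesis by (simp add: pcount_eq_emeasure)
qed

lemma pcount_translate:
  fixes x :: "'a::ab_group_add"
  shows "pcount ((\<lambda>y. y - x) ` (S - {x})) B = (\<integral>\<^sup>+ y. indicator B (y - x) \<partial>count_space (S - {x}))"
proof -
  have "bij_betw (\<lambda>y. y - x) (S - {x}) ((\<lambda>y. y - x) ` (S - {x}))"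
    by (rule inj_on_imp_bij_betw) (auto simp: inj_on_def)
  from nn_integral_bij_count_space[OF this, where f="indicator B"] show ?thesis
    by (simp add: pcount_eq_nn_integral)
qed

lemma measurable_pcount_bounded:
  assumes B: "B \<in> sets borel" "bounded B"
  shows "(\<lambda>S. pcount S B) \<in> borel_measurable configs"
proof -
  have "(\<lambda>S. card (S \<inter> B)) \<in> measurable configs (count_space UNIV)"
    unfolding measurable_count_space_eq2_countable
  proof safe
    fix k
    have "(\<lambda>S. card (S \<inter> B)) -` {k} \<inter> space configs = {S. locally_finite_set S \<and> card (S \<inter> B) = k}"
      by (auto simp: space_configs)
    also have "\<dots> \<in> sets configs"
      unfolding sets_configs using B by (intro sigma_sets.Basic) blast
    finally show "(\<lambda>S. card (S \<inter> B)) -` {k} \<inter> space configs \<in> sets configs" .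
  qed simp
  then have "(\<lambda>S. of_nat (card (S \<inter> B)) :: ennreal) \<in> borel_measurable configs"
    by (rule measurable_compose) simp
  then show ?thesis
    by (rule measurable_cong[THEN iffD1, rotated])
      (auto simp: space_configs pcount_def locally_finite_set_def B)
qed

lemma measurable_pcount:
  assumes "B \<in> sets borel"
  shows "(\<lambda>S. pcount S B) \<in> borel_measurable configs"
  unfolding pcount_SUP_ball[of _ B] using assms
  by (intro borel_measurable_SUP measurable_pcount_bounded) auto

lemma nn_integral_pcount_SUP_ball:
  assumes f: "f \<in> measurable M configs" and B: "B \<in> sets borel"
  shows "(\<integral>\<^sup>+ x. pcount (f x) B \<partial>M) = (SUP n::nat. \<integral>\<^sup>+ x. pcount (f x) (B \<inter> ball 0 (real n)) \<partial>M)"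
  unfolding pcount_SUP_ball[of _ B]
proof (rule nn_integral_monotone_convergence_SUP)
  show "incseq (\<lambda>n x. pcount (f x) (B \<inter> ball 0 (real n)))"
    by (rule incseq_SucI) (auto simp: le_fun_def intro!: pcount_mono)
  show "(\<lambda>x. pcount (f x) (B \<inter> ball 0 (real n))) \<in> borel_measurable M" for n
    using B by (intro measurable_compose[OF f measurable_pcount]) auto
qed

lemma bij_betw_distinct_tuples_1:
  "bij_betw (\<lambda>x. \<lambda>i\<in>{..<1::nat}. x) S (distinct_tuples 1 S)"
  by (rule bij_betw_byWitness[where f'="\<lambda>t. t 0"])
    (auto simp: distinct_tuples_def PiE_def extensional_def fun_eq_iff lessThan_Suc)

lemma bij_betw_distinct_tuples_2:
  "bij_betw (\<lambda>(x, y). \<lambda>i\<in>{..<2::nat}. if i = 0 then x else y)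
     (SIGMA x:S. S - {x}) (distinct_tuples 2 S)"
proof -
  let ?f = "\<lambda>(x, y). \<lambda>i\<in>{..<2::nat}. if i = 0 then x else y"
  have two: "{..<2::nat} = {0, 1}" by auto
  have left: "\<forall>p\<in>SIGMA x:S. S - {x}. (\<lambda>t. (t 0, t 1)) (?f p) = p"
    by auto
  have right: "\<forall>t\<in>distinct_tuples 2 S. ?f (t 0, t 1) = t"
  proof
    fix t assume t: "t \<in> distinct_tuples 2 S"
    show "?f (t 0, t 1) = t"
    proof
      fix i show "?f (t 0, t 1) i = t i"
        using t by (cases "i < 2") (auto simp: distinct_tuples_def PiE_def extensional_def less_2_cases_iff)
    qed
  qed
  have maps_into: "?f ` (SIGMA x:S. S - {x}) \<subseteq> distinct_tuples 2 S"
  proof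
    fix t assume "t \<in> ?f ` (SIGMA x:S. S - {x})"
    then obtain x y where xy: "x \<in> S" "y \<in> S" "y \<noteq> x"
      and t: "t = (\<lambda>i\<in>{..<2::nat}. if i = 0 then x else y)" by auto
    have "t \<in> PiE {..<2} (\<lambda>_. S)"
      unfolding t using xy by (intro restrict_PiE_iff[THEN iffD2]) auto
    moreover have "inj_on t {..<2}"
      unfolding t two using xy by (auto simp: inj_on_def)
    ultimately show "t \<in> distinct_tuples 2 S"
      by (simp add: distinct_tuples_def)
  qed
  have inverse_into: "(\<lambda>t. (t 0, t 1)) ` distinct_tuples 2 S \<subseteq> (SIGMA x:S. S - {x})"
  proof
    fix p assume "p \<in> (\<lambda>t. (t 0, t 1)) ` distinct_tuples 2 S"
    then obtain t where p: "p = (t 0, t 1)" and t: "t \<in> PiE {..<2::nat} (\<lambda>_. S)" "inj_on t {..<2}"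
      by (auto simp: distinct_tuples_def)
    have "t 1 \<noteq> t 0"
      using inj_onD[OF t(2), of 1 0] by auto
    then show "p \<in> (SIGMA x:S. S - {x})"
      using PiE_mem[OF t(1), of 0] PiE_mem[OF t(1), of 1] p by auto
  qed
  from left right maps_into inverse_into show ?thesis
    by (rule bij_betw_byWitness)
qed

lemma nn_integral_distinct_tuples_1:
  "(\<integral>\<^sup>+ t. g (t 0) \<partial>count_space (distinct_tuples 1 S)) = (\<integral>\<^sup>+ x. g x \<partial>count_space S)"
  using nn_integral_bij_count_space[OF bij_betw_distinct_tuples_1, where f="\<lambda>t. g (t 0)"] by simp

lemma nn_integral_distinct_tuples_2:
  assumes S: "countable S"
  shows "(\<integral>\<^sup>+ t. g (t 0) (t 1) \<partial>count_space (distinct_tuples 2 S))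
       = (\<integral>\<^sup>+ x. \<integral>\<^sup>+ y. g x y \<partial>count_space (S - {x}) \<partial>count_space S)"
proof -
  interpret sigma_finite_measure "count_space S"
    by (rule sigma_finite_measure_count_space_countable[OF S])
  let ?D = "SIGMA x:S. S - {x}"
  have "(\<integral>\<^sup>+ t. g (t 0) (t 1) \<partial>count_space (distinct_tuples 2 S))
      = (\<integral>\<^sup>+ p. g (fst p) (snd p) \<partial>count_space ?D)"
    using nn_integral_bij_count_space[OF bij_betw_distinct_tuples_2, where f="\<lambda>t. g (t 0) (t 1)"]
    by (simp add: split_beta)
  also have "\<dots> = (\<integral>\<^sup>+ p. g (fst p) (snd p) * indicator ?D p \<partial>count_space (S \<times> S))"
    by (subst (1 2) nn_integral_count_space_indicator) (auto intro!: nn_integral_cong simp: indicator_def)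
  also have "\<dots> = (\<integral>\<^sup>+ p. g (fst p) (snd p) * indicator ?D p \<partial>(count_space S \<Otimes>\<^sub>M count_space S))"
    by (simp add: pair_measure_countable S)
  also have "\<dots> = (\<integral>\<^sup>+ x. \<integral>\<^sup>+ y. g x y * indicator ?D (x, y) \<partial>count_space S \<partial>count_space S)"
    by (subst nn_integral_fst[symmetric]) (auto simp: pair_measure_countable S)
  also have "\<dots> = (\<integral>\<^sup>+ x. \<integral>\<^sup>+ y. g x y \<partial>count_space (S - {x}) \<partial>count_space S)"
    by (intro nn_integral_cong, subst (1 2) nn_integral_count_space_indicator)
      (auto intro!: nn_integral_cong simp: indicator_def)
  finally show ?thesis .
qed

lemma kdet_1: "kdet K 1 t = K (t 0) (t 0)"
  by (simp add: kdet_def lessThan_Suc)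

lemma kdet_2: "kdet K 2 t = K (t 0) (t 0) * K (t 1) (t 1) - K (t 0) (t 1) * K (t 1) (t 0)"
proof -
  have "{..<2::nat} = insert 0 {1}" by auto
  then show ?thesis
    unfolding kdet_def
    by (simp only:) (subst sum_over_permutations_insert; auto simp: sign_swap_id sign_id transpose_def)
qed

lemma dpp_factorial_moment:
  assumes "dpp P K" "k \<ge> 1" "f \<in> borel_measurable (PiM {..<k} (\<lambda>_. lborel))"
  shows "(\<integral>\<^sup>+ S. (\<integral>\<^sup>+ t. f t \<partial>count_space (distinct_tuples k S)) \<partial>P)
       = (\<integral>\<^sup>+ t. f t * ennreal (kdet K k t) \<partial>PiM {..<k} (\<lambda>_. lborel))"
  using assms unfolding dpp_def by blast

lemma dpp_second_factorial_moment:
  assumes dpp: "dpp P K" and f: "case_prod f \<in> borel_measurable (lborel \<Otimes>\<^sub>M lborel)"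
    and K: "case_prod K \<in> borel_measurable (lborel \<Otimes>\<^sub>M lborel)"
  shows "(\<integral>\<^sup>+ S. \<integral>\<^sup>+ x. \<integral>\<^sup>+ y. f x y \<partial>count_space (S - {x}) \<partial>count_space S \<partial>P)
       = (\<integral>\<^sup>+ x. \<integral>\<^sup>+ y. f x y * ennreal (K x x * K y y - K x y * K y x) \<partial>lborel \<partial>lborel)"
proof -
  have "space P = space configs"
    using dpp unfolding dpp_def by (intro sets_eq_imp_space_eq) simp
  then have "(\<integral>\<^sup>+ S. \<integral>\<^sup>+ x. \<integral>\<^sup>+ y. f x y \<partial>count_space (S - {x}) \<partial>count_space S \<partial>P)
      = (\<integral>\<^sup>+ S. \<integral>\<^sup>+ t. f (t 0) (t 1) \<partial>count_space (distinct_tuples 2 S) \<partial>P)"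
    by (intro nn_integral_cong nn_integral_distinct_tuples_2[symmetric])
      (simp add: space_configs locally_finite_set_countable)
  also have "\<dots> = (\<integral>\<^sup>+ t. f (t 0) (t 1) * ennreal (kdet K 2 t) \<partial>PiM {..<2::nat} (\<lambda>_. lborel))"
    by (intro dpp_factorial_moment[OF dpp] measurable_PiM_lessThan_2 f) simp
  also have "\<dots> = (\<integral>\<^sup>+ x. \<integral>\<^sup>+ y. f x y * ennreal (K x x * K y y - K x y * K y x) \<partial>lborel \<partial>lborel)"
  proof -
    have K_at: "(\<lambda>p. K (g p) (h p)) \<in> borel_measurable (lborel \<Otimes>\<^sub>M lborel)"
      if "g \<in> lborel \<Otimes>\<^sub>M lborel \<rightarrow>\<^sub>M lborel" "h \<in> lborel \<Otimes>\<^sub>M lborel \<rightarrow>\<^sub>M lborel" for g h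
      using measurable_compose[OF measurable_Pair[OF that] K] by simp
    have "(\<lambda>(x, y). f x y * ennreal (K x x * K y y - K x y * K y x)) \<in> borel_measurable (lborel \<Otimes>\<^sub>M lborel)"
      unfolding case_prod_beta'
      by (intro borel_measurable_times_ennreal f[unfolded case_prod_beta'] measurable_compose[OF _ measurable_ennreal]
          borel_measurable_diff borel_measurable_times K_at measurable_fst measurable_snd)
    then show ?thesis
      unfolding kdet_2 by (rule nn_integral_PiM_lessThan_2)
  qed
  finally show ?thesis .
qed

lemma stationary_dpp_first_moment:
  assumes dpp: "dpp P (\<lambda>x y. K (x - y))" and B: "B \<in> sets borel"
  shows "(\<integral>\<^sup>+ S. pcount S B \<partial>P) = ennreal (K 0) * emeasure lborel B"
proof -
  have B_0: "(\<lambda>t. indicator B (t 0) :: ennreal) \<in> borel_measurable (PiM {..<1::nat} (\<lambda>_. lborel))"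
    by (rule measurable_compose[of _ _ lborel]) (auto intro!: measurable_component_singleton borel_measurable_indicator simp: B)
  have "(\<integral>\<^sup>+ S. pcount S B \<partial>P) = (\<integral>\<^sup>+ S. \<integral>\<^sup>+ t. indicator B (t 0) \<partial>count_space (distinct_tuples 1 S) \<partial>P)"
    by (simp only: nn_integral_distinct_tuples_1 pcount_eq_nn_integral)
  also have "\<dots> = (\<integral>\<^sup>+ t. indicator B (t 0) * ennreal (kdet (\<lambda>x y. K (x - y)) 1 t) \<partial>PiM {..<1::nat} (\<lambda>_. lborel))"
    by (rule dpp_factorial_moment[OF dpp order.refl B_0])
  also have "\<dots> = (\<integral>\<^sup>+ t. indicator B (t 0) * ennreal (K 0) \<partial>PiM {..<1::nat} (\<lambda>_. lborel))"
    by (simp only: kdet_1 diff_self)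
  also have "\<dots> = (\<integral>\<^sup>+ x. indicator B x * ennreal (K 0) \<partial>lborel)"
    using B by (intro nn_integral_PiM_lessThan_1) simp
  also have "\<dots> = emeasure lborel B * ennreal (K 0)"
    using B by (simp add: nn_integral_multc)
  finally show ?thesis by (simp only: mult.commute)
qed

lemma stationary_dpp_kernel_bound:
  fixes K :: "'a::euclidean_space \<Rightarrow> real"
  assumes dpp: "dpp P (\<lambda>x y. K (x - y))" and K_sym: "\<forall>x. K (- x) = K x"
    and K: "K \<in> borel_measurable borel"
  shows "AE z in lborel. (K z)\<^sup>2 \<le> (K 0)\<^sup>2"
proof -
  define N where "N = {z. (K 0)\<^sup>2 < (K z)\<^sup>2}"
  have N: "N \<in> sets borel"
    unfolding N_def using K by measurable
  have N_diff: "(\<lambda>(x, y). indicator N (y - x) :: ennreal) \<in> borel_measurable (lborel \<Otimes>\<^sub>M lborel)"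
    using N by measurable
  have kdet_nonneg: "AE t in PiM {..<2::nat} (\<lambda>_. lborel). kdet (\<lambda>x y. K (x - y)) 2 t \<ge> 0"
    using dpp unfolding dpp_def by auto
  have kdet_eq: "kdet (\<lambda>x y. K (x - y)) 2 t = (K 0)\<^sup>2 - (K (t 1 - t 0))\<^sup>2" for t
    using K_sym[rule_format, of "t 1 - t 0"] by (simp add: kdet_2 power2_eq_square)
  have "AE t in PiM {..<2::nat} (\<lambda>_. lborel). indicator N (t 1 - t 0) = (0::ennreal)"
    using kdet_nonneg by eventually_elim (simp add: kdet_eq N_def)
  then have "(\<integral>\<^sup>+ t. indicator N (t 1 - t 0) \<partial>PiM {..<2::nat} (\<lambda>_. lborel)) = 0"
    using measurable_PiM_lessThan_2[OF N_diff] by (simp add: nn_integral_0_iff_AE)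
  also have "(\<integral>\<^sup>+ t. indicator N (t 1 - t 0) \<partial>PiM {..<2::nat} (\<lambda>_. lborel))
      = (\<integral>\<^sup>+ x. \<integral>\<^sup>+ y. indicator N (y - x) \<partial>lborel \<partial>lborel)"
    by (rule nn_integral_PiM_lessThan_2[OF N_diff])
  also have "\<dots> = (\<integral>\<^sup>+ x. emeasure lborel N \<partial>lborel)"
    using N by (subst nn_integral_lborel_translate) auto
  finally have "emeasure lborel N = 0"
    by (simp add: nn_integral_const ennreal_mult_eq_top_iff)
  then show ?thesis
    using N by (intro AE_I'[of N]) (auto simp: N_def null_sets_def not_le)
qed

lemma stationary_dpp_palm_first_moment:
  fixes K :: "'a::euclidean_space \<Rightarrow> real"
  assumes dpp: "dpp P (\<lambda>x y. K (x - y))" and palm: "reduced_palm P Q"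
    and K_sym: "\<forall>x. K (- x) = K x" and K: "K \<in> borel_measurable borel"
    and B: "B \<in> sets borel"
  shows "ennreal (K 0) * (\<integral>\<^sup>+ S. pcount S B \<partial>Q)
       = (\<integral>\<^sup>+ z. indicator B z * ennreal ((K 0)\<^sup>2 - (K z)\<^sup>2) \<partial>lborel)"
proof -
  define A :: "'a set" where "A = cbox 0 One"
  have A: "A \<in> sets borel" "bounded A" "emeasure lborel A = 1"
    by (auto simp: A_def emeasure_lborel_cbox_eq)
  define g where "g z = indicator B z * ennreal ((K 0)\<^sup>2 - (K z)\<^sup>2)" for z
  have g: "g \<in> borel_measurable borel"
    unfolding g_def using B K by measurable
  have AB: "(\<lambda>(x, y). indicator A x * indicator B (y - x) :: ennreal) \<in> borel_measurable (lborel \<Otimes>\<^sub>M lborel)"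
    using A B by measurable
  have K_diff: "(\<lambda>(x, y). K (x - y)) \<in> borel_measurable (lborel \<Otimes>\<^sub>M lborel)"
    using K by measurable
  have K_swap: "K (x - y) = K (y - x)" for x y
    using K_sym[rule_format, of "y - x"] by simp
  have "ennreal (K 0) * (\<integral>\<^sup>+ S. pcount S B \<partial>Q) = (\<integral>\<^sup>+ S. pcount S A \<partial>P) * (\<integral>\<^sup>+ S. pcount S B \<partial>Q)"
    using A by (simp add: stationary_dpp_first_moment[OF dpp])
  also have "\<dots> = (\<integral>\<^sup>+ S. \<integral>\<^sup>+ x. indicator A x * pcount ((\<lambda>y. y - x) ` (S - {x})) B \<partial>count_space S \<partial>P)"
    by (rule palm[unfolded reduced_palm_def, THEN conjunct2, THEN conjunct2, rule_format,
          OF measurable_pcount[OF B] A(1) A(2), symmetric])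
  also have "\<dots> = (\<integral>\<^sup>+ S. \<integral>\<^sup>+ x. \<integral>\<^sup>+ y. indicator A x * indicator B (y - x) \<partial>count_space (S - {x}) \<partial>count_space S \<partial>P)"
    by (simp add: pcount_translate nn_integral_cmult)
  also have "\<dots> = (\<integral>\<^sup>+ x. \<integral>\<^sup>+ y. indicator A x * indicator B (y - x)
      * ennreal (K (x - x) * K (y - y) - K (x - y) * K (y - x)) \<partial>lborel \<partial>lborel)"
    by (rule dpp_second_factorial_moment[OF dpp AB K_diff])
  also have "\<dots> = (\<integral>\<^sup>+ x. \<integral>\<^sup>+ y. indicator A x * g (y - x) \<partial>lborel \<partial>lborel)"
    by (simp add: g_def K_swap power2_eq_square mult.assoc)
  also have "\<dots> = (\<integral>\<^sup>+ z. g z \<partial>lborel)"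
    using A by (simp add: nn_integral_lborel_translate_pair g)
  finally show ?thesis
    by (simp add: g_def)
qed

locale stationary_dpp_palm_decomposition =
  fixes K :: "'a::euclidean_space \<Rightarrow> real"
    and P Q :: "'a set measure"
    and J :: "('a set \<times> 'a set) measure"
  assumes K_measurable: "K \<in> borel_measurable borel"
    and K_sym: "\<forall>x. K (- x) = K x"
    and K_pos: "K 0 > 0"
    and dpp: "dpp P (\<lambda>x y. K (x - y))"
    and palm: "reduced_palm P Q"
    and J_sets: "sets J = sets (configs \<Otimes>\<^sub>M configs)"
    and J_fst: "distr J configs fst = Q"
    and J_disj: "AE p in J. fst p \<inter> snd p = {}"
    and J_union: "distr J configs (\<lambda>p. fst p \<union> snd p) = P"
begin

lemma measurable_fst_snd: "fst \<in> measurable J configs" "snd \<in> measurable J configs"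
  unfolding measurable_cong_sets[OF J_sets refl] by (rule measurable_fst measurable_snd)+

lemma measurable_union: "(\<lambda>p. fst p \<union> snd p) \<in> measurable J configs"
proof (rule measurable_if_prob_space_distr)
  have "prob_space P"
    using dpp unfolding dpp_def by (elim conjE)
  then show "prob_space (distr J configs (\<lambda>p. fst p \<union> snd p))"
    by (simp only: J_union)
  have space_J: "space J = space configs \<times> space configs"
    using sets_eq_imp_space_eq[OF J_sets] by (simp add: space_pair_measure)
  show "(\<lambda>p. fst p \<union> snd p) \<in> space J \<rightarrow> space configs"
    by (auto simp: space_J space_configs intro: locally_finite_set_Un)
qed

lemma first_moment_split:
  assumes B: "B \<in> sets borel"
  shows "(\<integral>\<^sup>+ S. pcount S B \<partial>P) = (\<integral>\<^sup>+ S. pcount S B \<partial>Q) + (\<integral>\<^sup>+ p. pcount (snd p) B \<partial>J)"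
proof -
  have "(\<integral>\<^sup>+ S. pcount S B \<partial>P) = (\<integral>\<^sup>+ p. pcount (fst p \<union> snd p) B \<partial>J)"
    unfolding J_union[symmetric] by (rule nn_integral_distr[OF measurable_union]) (simp add: measurable_pcount[OF B])
  also have "\<dots> = (\<integral>\<^sup>+ p. pcount (fst p) B + pcount (snd p) B \<partial>J)"
    by (intro nn_integral_cong_AE) (use J_disj in \<open>eventually_elim, simp add: pcount_Un_disjoint\<close>)
  also have "\<dots> = (\<integral>\<^sup>+ p. pcount (fst p) B \<partial>J) + (\<integral>\<^sup>+ p. pcount (snd p) B \<partial>J)"
    by (rule nn_integral_add; rule measurable_compose[OF _ measurable_pcount[OF B]])
      (rule measurable_fst_snd)+
  also have "(\<integral>\<^sup>+ p. pcount (fst p) B \<partial>J) = (\<integral>\<^sup>+ S. pcount S B \<partial>Q)"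
    unfolding J_fst[symmetric] by (rule nn_integral_distr[OF measurable_fst_snd(1), symmetric]) (simp add: measurable_pcount[OF B])
  finally show ?thesis .
qed

lemma complement_first_moment_bounded:
  assumes B: "B \<in> sets borel" "bounded B"
  shows "ennreal (K 0) * (\<integral>\<^sup>+ p. pcount (snd p) B \<partial>J) = (\<integral>\<^sup>+ z\<in>B. (K z)\<^sup>2 \<partial>lborel)"
proof -
  define D where "D = (\<integral>\<^sup>+ z. indicator B z * ennreal ((K 0)\<^sup>2 - (K z)\<^sup>2) \<partial>lborel)"
  have D_plus: "D + (\<integral>\<^sup>+ z\<in>B. (K z)\<^sup>2 \<partial>lborel) = (\<integral>\<^sup>+ z. ennreal ((K 0)\<^sup>2) * indicator B z \<partial>lborel)"
  proof -
    have "(\<lambda>z. indicator B z * ennreal ((K 0)\<^sup>2 - (K z)\<^sup>2)) \<in> borel_measurable lborel"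
      "(\<lambda>z. ennreal ((K z)\<^sup>2) * indicator B z) \<in> borel_measurable lborel"
      using B K_measurable by measurable
    then have "D + (\<integral>\<^sup>+ z\<in>B. (K z)\<^sup>2 \<partial>lborel)
        = (\<integral>\<^sup>+ z. indicator B z * ennreal ((K 0)\<^sup>2 - (K z)\<^sup>2) + ennreal ((K z)\<^sup>2) * indicator B z \<partial>lborel)"
      unfolding D_def by (rule nn_integral_add[symmetric])
    also have "\<dots> = (\<integral>\<^sup>+ z. ennreal ((K 0)\<^sup>2) * indicator B z \<partial>lborel)"
    proof (rule nn_integral_cong_AE)
      show "AE z in lborel. indicator B z * ennreal ((K 0)\<^sup>2 - (K z)\<^sup>2) + ennreal ((K z)\<^sup>2) * indicator B z
          = ennreal ((K 0)\<^sup>2) * indicator B z"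
        using stationary_dpp_kernel_bound[OF dpp K_sym K_measurable]
      proof eventually_elim
        case (elim z)
        then have "ennreal ((K 0)\<^sup>2 - (K z)\<^sup>2) + ennreal ((K z)\<^sup>2) = ennreal ((K 0)\<^sup>2)"
          by (subst ennreal_plus[symmetric]) auto
        then show ?case
          by (auto simp: indicator_def)
      qed
    qed
    finally show ?thesis .
  qed
  have "(\<integral>\<^sup>+ z. ennreal ((K 0)\<^sup>2) * indicator B z \<partial>lborel) = ennreal (K 0) * (\<integral>\<^sup>+ S. pcount S B \<partial>P)"
    using B K_pos
    by (simp add: nn_integral_cmult stationary_dpp_first_moment[OF dpp] ennreal_mult power2_eq_square mult.assoc)
  also have "\<dots> = D + ennreal (K 0) * (\<integral>\<^sup>+ p. pcount (snd p) B \<partial>J)"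
    unfolding first_moment_split[OF B(1)] distrib_left D_def
    by (simp add: stationary_dpp_palm_first_moment[OF dpp palm K_sym K_measurable B(1)])
  finally have eq: "D + (\<integral>\<^sup>+ z\<in>B. (K z)\<^sup>2 \<partial>lborel) = D + ennreal (K 0) * (\<integral>\<^sup>+ p. pcount (snd p) B \<partial>J)"
    using D_plus by simp
  have "D \<le> (\<integral>\<^sup>+ z. ennreal ((K 0)\<^sup>2) * indicator B z \<partial>lborel)"
    using D_plus by (metis le_iff_add)
  also have "\<dots> < \<infinity>"
    using B emeasure_bounded_finite[OF B(2)] by (simp add: nn_integral_cmult_indicator ennreal_mult_less_top)
  finally show ?thesis
    using eq by (metis ennreal_add_left_cancel order.strict_iff_not)
qed

lemma complement_first_moment:
  assumes B: "B \<in> sets borel"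
  shows "ennreal (K 0) * (\<integral>\<^sup>+ p. pcount (snd p) B \<partial>J) = (\<integral>\<^sup>+ z\<in>B. (K z)\<^sup>2 \<partial>lborel)"
proof -
  let ?\<mu> = "density lborel (\<lambda>z. ennreal ((K z)\<^sup>2))"
  have density: "(\<integral>\<^sup>+ z\<in>Y. (K z)\<^sup>2 \<partial>lborel) = emeasure ?\<mu> Y" if "Y \<in> sets borel" for Y
    using that K_measurable by (subst emeasure_density) auto
  have B_n: "B \<inter> ball 0 (real n) \<in> sets borel" "bounded (B \<inter> ball 0 (real n))" for n
    using B by auto
  have "ennreal (K 0) * (\<integral>\<^sup>+ p. pcount (snd p) B \<partial>J)
      = (SUP n::nat. ennreal (K 0) * (\<integral>\<^sup>+ p. pcount (snd p) (B \<inter> ball 0 (real n)) \<partial>J))"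
    using B measurable_fst_snd by (simp add: nn_integral_pcount_SUP_ball SUP_mult_left_ennreal)
  also have "\<dots> = (SUP n::nat. emeasure ?\<mu> (B \<inter> ball 0 (real n)))"
    by (simp add: complement_first_moment_bounded[OF B_n] density[OF B_n(1)])
  also have "\<dots> = emeasure ?\<mu> (\<Union>n. B \<inter> ball 0 (real n))"
    using B by (intro SUP_emeasure_incseq) (auto simp: incseq_def)
  also have "(\<Union>n. B \<inter> ball 0 (real n)) = B"
    by (auto intro: reals_Archimedean2)
  finally show ?thesis
    using B by (simp add: density)
qed

end

lemma distributed_emeasure_normalized_density:
  fixes h :: "'a::euclidean_space \<Rightarrow> real"
  assumes M: "prob_space M" and X: "distributed M lborel X (\<lambda>x. ennreal (h x / (\<integral>y. h y \<partial>lborel)))"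
    and h_int: "integrable lborel h" and h_nonneg: "\<forall>x. 0 \<le> h x" and h: "h \<in> borel_measurable borel"
    and Y: "Y \<in> sets borel"
  shows "emeasure M (X -` Y \<inter> space M) = (\<integral>\<^sup>+ z\<in>Y. h z \<partial>lborel) / (\<integral>\<^sup>+ z. h z \<partial>lborel)"
proof -
  define c where "c = (\<integral>y. h y \<partial>lborel)"
  have law: "emeasure M (X -` A \<inter> space M) = (\<integral>\<^sup>+ z\<in>A. h z / c \<partial>lborel)" if "A \<in> sets borel" for A
    using distributed_emeasure[OF X, of A] that by (simp add: c_def)
  have "c \<noteq> 0"
    using law[of UNIV] prob_space.emeasure_space_1[OF M] by auto
  moreover have "c \<ge> 0"
    unfolding c_def using h_nonneg by (intro integral_nonneg_AE) auto
  ultimately have c_pos: "c > 0"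
    by simp
  have "(\<integral>\<^sup>+ z\<in>Y. h z / c \<partial>lborel) = (\<integral>\<^sup>+ z. ennreal (h z) * indicator Y z / ennreal c \<partial>lborel)"
    using c_pos h_nonneg by (intro nn_integral_cong) (simp add: divide_ennreal indicator_def)
  also have "\<dots> = (\<integral>\<^sup>+ z\<in>Y. h z \<partial>lborel) / ennreal c"
    by (rule nn_integral_divide) (use Y h in measurable)
  also have "ennreal c = (\<integral>\<^sup>+ z. h z \<partial>lborel)"
    unfolding c_def using h_int h_nonneg by (simp add: nn_integral_eq_integral)
  finally show ?thesis
    using law[OF Y] by simp
qed

theorem lemma3p1:
  fixes K :: "'a::euclidean_space \<Rightarrow> real"
    and P Q :: "'a set measure"
    and J :: "('a set \<times> 'a set) measure"
    and M :: "'m measure" and X :: "'m \<Rightarrow> 'a"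
    and B :: "'a set"
  assumes K_cont: "continuous_on UNIV K"
    and K_L2: "integrable lborel (\<lambda>x. (K x)\<^sup>2)"
    and K_sym: "\<forall>x. K (- x) = K x"
    and K_pos: "K 0 > 0"
    and K_fourier: "\<exists>g. L2_fourier K g \<and> (\<forall>\<xi>. 0 \<le> g \<xi> \<and> g \<xi> < 1)"
    and Phi: "dpp P (\<lambda>x y. K (x - y))"
    and Palm: "reduced_palm P Q"
    and J_prob: "prob_space J"
    and J_sets: "sets J = sets (configs \<Otimes>\<^sub>M configs)"
    and J_fst: "distr J configs fst = Q"
    and J_disj: "AE p in J. fst p \<inter> snd p = {}"
    and J_union: "distr J configs (\<lambda>p. fst p \<union> snd p) = P"
    and M_prob: "prob_space M"
    and X_distr: "distributed M lborel X (\<lambda>x. ennreal ((K x)\<^sup>2 / (\<integral>y. (K y)\<^sup>2 \<partial>lborel)))"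
    and B_borel: "B \<in> sets borel"
  shows "emeasure M (X -` B \<inter> space M)
           = (\<integral>\<^sup>+ p. pcount (snd p) B \<partial>J) / (\<integral>\<^sup>+ p. pcount (snd p) UNIV \<partial>J)"
proof -
  interpret stationary_dpp_palm_decomposition K P Q J
    using K_cont K_sym K_pos Phi Palm J_sets J_fst J_disj J_union
    by unfold_locales (auto intro: borel_measurable_continuous_onI)
  have K_sq: "(\<lambda>x. (K x)\<^sup>2) \<in> borel_measurable borel"
    using K_measurable by measurable
  have "emeasure M (X -` B \<inter> space M) = (\<integral>\<^sup>+ z\<in>B. (K z)\<^sup>2 \<partial>lborel) / (\<integral>\<^sup>+ z\<in>UNIV. (K z)\<^sup>2 \<partial>lborel)"
    using distributed_emeasure_normalized_density[OF M_prob X_distr K_L2 _ K_sq B_borel] by simp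
  also have "\<dots> = (ennreal (K 0) * (\<integral>\<^sup>+ p. pcount (snd p) B \<partial>J))
      / (ennreal (K 0) * (\<integral>\<^sup>+ p. pcount (snd p) UNIV \<partial>J))"
    by (simp only: complement_first_moment[OF B_borel] complement_first_moment[OF sets.top[of borel, unfolded space_borel]])
  also have "\<dots> = (\<integral>\<^sup>+ p. pcount (snd p) B \<partial>J) / (\<integral>\<^sup>+ p. pcount (snd p) UNIV \<partial>J)"
    using K_pos by (intro ennreal_mult_divide_mult_cancel) auto
  finally show ?thesis .
qed

end
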